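(* Fix a positive integer $m$ and let $n\to\infty$. Then \[\mathcal{C}_{m,n}^+ = (1+o(1))\, H_m \log n,\] where $H_m=\sum_{j=1}^{m} j^{-1}$ is the $m$-th harmonic number, and \[\mathcal{C}_{m,n}^-=\Theta(n^{-1/m}),\] where the implicit constants may depend on $m$.
   Context: Let $\mathcal{S}_{m,n}$ be the set of words over the alphabet $[n]=\{1,\dots,n\}$ in which each symbol appears exactly $m$ times (a deck of $mn$ cards, $m$ copies of each of $n$ card types). A deck order $\pi\sim\mathcal{S}_{m,n}$ is chosen uniformly at random. In the complete feedback model a guesser guesses $\pi_1,\pi_2,\dots,\pi_{mn}$ one at a time; before guessing $\pi_t$ the guesser knows the true values $\pi_1,\dots,\pi_{t-1}$. For a guessing strategy $\mathcal{G}$, let $C(\mathcal{G},\pi)$ be the number of correct guesses. Define $\mathcal{C}^+_{m,n}=\max_{\mathcal{G}}\mathbb{E}[C(\mathcal{G},\pi)]$ and $\mathcal{C}^-_{m,n}=\min_{\mathcal{G}}\mathbb{E}[C(\mathcal{G},\pi)]$ over all strategies. $\log$ is the natural logarithm. *)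

theory Defs
  imports "HOL-Analysis.Analysis" "HOL-Library.Landau_Symbols"
begin

definition decks :: "nat \<Rightarrow> nat \<Rightarrow> nat list set" where
  "decks m n = {w. length w = m * n \<and> set w \<subseteq> {1..n} \<and>
                   (\<forall>i\<in>{1..n}. count (mset w) i = m)}"

text \<open>A (deterministic) guessing strategy in the complete feedback model: given the
  already revealed prefix, it guesses a card type in {1..n}.\<close>
definition strategy :: "nat \<Rightarrow> (nat list \<Rightarrow> nat) \<Rightarrow> bool" where
  "strategy n G \<longleftrightarrow> (\<forall>xs. G xs \<in> {1..n})"

definition correct :: "(nat list \<Rightarrow> nat) \<Rightarrow> nat list \<Rightarrow> nat" where
  "correct G w = card {t. t < length w \<and> G (take t w) = w ! t}"

definition expected_correct :: "nat \<Rightarrow> nat \<Rightarrow> (nat list \<Rightarrow> nat) \<Rightarrow> real" where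
  "expected_correct m n G =
     (\<Sum>w\<in>decks m n. real (correct G w)) / real (card (decks m n))"

definition Cplus :: "nat \<Rightarrow> nat \<Rightarrow> real" where
  "Cplus m n = (SUP G\<in>{G. strategy n G}. expected_correct m n G)"

definition Cminus :: "nat \<Rightarrow> nat \<Rightarrow> real" where
  "Cminus m n = (INF G\<in>{G. strategy n G}. expected_correct m n G)"

end

theory Submission
  imports Defs "HOL-Real_Asymp.Real_Asymp"
begin

text \<open>Given the first \<open>t\<close> cards, the remaining positions are exchangeable, so the guess at
  time \<open>t\<close> is correct with probability (expected copies left of the guessed type) / (mn - t).
  Hence guessing a type with the most copies left is optimal: its score is the sum over \<open>t\<close>
  and \<open>j \<le> m\<close> of P(some type has at least \<open>j\<close> copies left) / (mn - t). Every strategy scores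
  at least the sum over \<open>t\<close> of P(no type is exhausted) / (mn), and guessing a type with the
  fewest copies left scores at most that sum divided by \<open>n\<close>. These probabilities are bounded
  by first and second moments of the counts \<open>occ choose j\<close>, which double counting computes
  exactly. Level \<open>j\<close> then contributes about \<open>ln n / j\<close> to the optimal score, and no type is
  exhausted while \<open>t\<close> is below about \<open>m * n powr (1 - 1/m)\<close>, which gives \<open>\<Theta>(n powr (-1/m))\<close>.\<close>

lemma choose_ratio_eq_prod:
  assumes "j \<le> s" "s \<le> N"
  shows "real (s choose j) / real (N choose j) = (\<Prod>i<j. (real s - real i) / (real N - real i))"
proof -
  have "real (s choose j) / real (N choose j) =
      (\<Prod>i=0..<j. real (s - i) / real (j - i)) / (\<Prod>i=0..<j. real (N - i) / real (j - i))"
    using assms by (simp add: binomial_altdef_of_nat)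
  also have "\<dots> = (\<Prod>i=0..<j. (real (s - i) / real (j - i)) / (real (N - i) / real (j - i)))"
    by (simp add: prod_dividef)
  also have "\<dots> = (\<Prod>i=0..<j. (real s - real i) / (real N - real i))"
    using assms by (intro prod.cong refl) (simp add: of_nat_diff)
  finally show ?thesis by (simp add: atLeast0LessThan)
qed

lemma choose_ratio_le_power:
  assumes "s \<le> N"
  shows "real (s choose j) / real (N choose j) \<le> (real s / real N) ^ j"
proof (cases "j \<le> s")
  case False
  then show ?thesis by (simp add: binomial_eq_0)
next
  case True
  have "(real s - real i) / (real N - real i) \<le> real s / real N" if "i < j" for i
  proof -
    have "real i * real s \<le> real i * real N" using assms by (simp add: mult_left_mono)
    then show ?thesis using that True assms by (simp add: divide_simps algebra_simps)
  qed
  then have "(\<Prod>i<j. (real s - real i) / (real N - real i)) \<le> (\<Prod>i<j. real s / real N)"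
    using True assms by (intro prod_mono) auto
  then show ?thesis using choose_ratio_eq_prod[OF True assms] by simp
qed

lemma power_le_choose_ratio:
  assumes "2 * j \<le> s" "s \<le> N"
  shows "(real s / (2 * real N)) ^ j \<le> real (s choose j) / real (N choose j)"
proof -
  have "real s / (2 * real N) \<le> (real s - real i) / (real N - real i)" if "i < j" for i
  proof -
    have "real N * (2 * real i) \<le> real N * real s" using that assms by (intro mult_left_mono) auto
    then have "real s * (real N - real i) \<le> (real s - real i) * (2 * real N)"
      by (simp add: algebra_simps add_increasing2)
    then show ?thesis using that assms by (simp add: divide_simps)
  qed
  then have "(\<Prod>i<j. real s / (2 * real N)) \<le> (\<Prod>i<j. (real s - real i) / (real N - real i))"
    by (intro prod_mono) auto
  then show ?thesis using choose_ratio_eq_prod[of j s N] assms by simp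
qed

lemma choose_ratio_diff_le:
  assumes "2 * j \<le> s" "s \<le> N"
  shows "real ((s - j) choose j) / real ((N - j) choose j) \<le> real (s choose j) / real (N choose j)"
proof -
  have "(real (s - j) - real i) / (real (N - j) - real i) \<le> (real s - real i) / (real N - real i)"
    if "i < j" for i
  proof -
    have "real j * real s \<le> real j * real N" using assms by (simp add: mult_left_mono)
    then show ?thesis using that assms by (simp add: of_nat_diff divide_simps algebra_simps)
  qed
  moreover have "0 \<le> (real (s - j) - real i) / (real (N - j) - real i)" if "i < j" for i
    using that assms by (simp add: of_nat_diff)
  ultimately have "(\<Prod>i<j. (real (s - j) - real i) / (real (N - j) - real i))
      \<le> (\<Prod>i<j. (real s - real i) / (real N - real i))"
    by (intro prod_mono) auto
  then show ?thesis using choose_ratio_eq_prod[of j "s - j" "N - j"] choose_ratio_eq_prod[of j s N] assms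
    by simp
qed

lemma sum_inverse_le_ln_diff:
  assumes "0 < K" "K \<le> N"
  shows "(\<Sum>s\<in>{K<..N}. 1 / real s) \<le> ln N - ln K"
proof -
  have "{1..N} = {1..K} \<union> {K<..N}" "{1..K} \<inter> {K<..N} = {}" using assms by auto
  then have "harm N = harm K + (\<Sum>s\<in>{K<..N}. 1 / real s)"
    unfolding harm_def by (simp add: sum.union_disjoint divide_inverse)
  then show ?thesis using euler_mascheroni_sequence_decreasing[OF assms] by simp
qed

lemma ln_diff_le_sum_inverse:
  assumes "0 < K"
  shows "ln (real N + 1) - ln K \<le> (\<Sum>s=K..N. 1 / real s)"
proof (cases "K \<le> Suc N")
  case True
  have "ln (real N + 1) - ln K = (\<Sum>s=K..N. ln (real (Suc s)) - ln (real s))"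
    using sum_Suc_diff[OF True, of "\<lambda>s. ln (real s)"] by simp
  also have "\<dots> \<le> (\<Sum>s=K..N. 1 / real s)"
    using assms ln_diff_le_inverse[of "real s" for s] by (intro sum_mono) (auto simp: less_imp_le add.commute)
  finally show ?thesis .
next
  case False
  then show ?thesis using assms by (simp add: sum_nonneg)
qed

lemma sum_inverse_square_le:
  assumes "0 < K"
  shows "(\<Sum>t\<in>{K..<N}. 1 / real t ^ 2) \<le> 2 / K"
proof (cases "K \<le> N")
  case True
  have "1 / real t ^ 2 \<le> 2 / real t - 2 / real (Suc t)" if t: "0 < t" for t
  proof -
    have "real t * (real t + 1) \<le> 2 * real t ^ 2"
      using t by (simp add: power2_eq_square algebra_simps mult_le_cancel_left1)
    then have "2 / (2 * real t ^ 2) \<le> 2 / (real t * (real t + 1))"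
      using t by (intro frac_le) auto
    also have "\<dots> = 2 / real t - 2 / real (Suc t)"
      using t by (simp add: field_simps)
    finally show ?thesis by simp
  qed
  then have "(\<Sum>t\<in>{K..<N}. 1 / real t ^ 2) \<le> (\<Sum>t\<in>{K..<N}. 2 / real t - 2 / real (Suc t))"
    using assms by (intro sum_mono) auto
  also have "\<dots> = 2 / K - 2 / N"
    using sum_Suc_diff'[OF True, of "\<lambda>t. - 2 / real t"] by simp
  finally show ?thesis using divide_nonneg_nonneg[of 2 "real N"] by linarith
qed simp

lemma harm_le_one_plus_ln: "harm N \<le> 1 + ln (real N)"
proof (cases "N = 0")
  case False
  then show ?thesis using euler_mascheroni_sequence_decreasing[of 1 N] by (simp add: harm_def)
qed (simp add: harm_def)

lemma harm_mult_eq_sum: "harm m * x = (\<Sum>j=1..m. x / real j)"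
  by (simp add: harm_def sum_distrib_left sum_distrib_right divide_inverse mult.commute)

lemma sum_min_one_power_div_le:
  assumes r: "1 \<le> r" "r \<le> real N" and j: "1 \<le> j"
  shows "(\<Sum>s=1..N. min 1 ((real s / r) ^ j) / real s) \<le> ln N - ln r + 2"
proof -
  define K where "K = nat \<lfloor>r\<rfloor>"
  have K: "1 \<le> K" "real K \<le> r" "r < real K + 1" "K \<le> N"
    using r unfolding K_def by linarith+
  have "r / 2 \<le> real K" using K(1,3) by linarith
  have "min 1 ((real s / r) ^ j) / real s \<le> 1 / r" if "s \<in> {1..K}" for s
  proof -
    have "real s / r \<le> 1" using that K r by auto
    then have "(real s / r) ^ j \<le> real s / r"
      using power_decreasing[of 1 j "real s / r"] j r by simp
    then have "min 1 ((real s / r) ^ j) / real s \<le> (real s / r) / real s"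
      by (intro divide_right_mono) auto
    then show ?thesis using that by simp
  qed
  then have "(\<Sum>s=1..K. min 1 ((real s / r) ^ j) / real s) \<le> card {1..K} * (1 / r)"
    by (intro sum_bounded_above)
  also have "\<dots> \<le> 1" using K r by simp
  finally have head: "(\<Sum>s=1..K. min 1 ((real s / r) ^ j) / real s) \<le> 1" .
  have "(\<Sum>s\<in>{K<..N}. min 1 ((real s / r) ^ j) / real s) \<le> (\<Sum>s\<in>{K<..N}. 1 / real s)"
    by (intro sum_mono divide_right_mono) auto
  also have "\<dots> \<le> ln N - ln K" using K by (intro sum_inverse_le_ln_diff) auto
  also have "ln (r / 2) \<le> ln K" using K r by (subst ln_le_cancel_iff) (use \<open>r / 2 \<le> real K\<close> in auto)
  then have "ln N - ln K \<le> ln N - ln r + ln 2" using r by (simp add: ln_div)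
  finally have tail: "(\<Sum>s\<in>{K<..N}. min 1 ((real s / r) ^ j) / real s) \<le> ln N - ln r + ln 2" .
  have "{1..N} = {1..K} \<union> {K<..N}" using K by auto
  then have "(\<Sum>s=1..N. min 1 ((real s / r) ^ j) / real s)
      = (\<Sum>s=1..K. min 1 ((real s / r) ^ j) / real s) + (\<Sum>s\<in>{K<..N}. min 1 ((real s / r) ^ j) / real s)"
    by (simp only:) (subst sum.union_disjoint; auto)
  then show ?thesis using head tail ln_2_less_1 by linarith
qed

lemma sum_div_ge_of_ge_one_minus:
  fixes K N :: nat and f :: "nat \<Rightarrow> real"
  assumes K: "0 < K" and f: "\<And>s. s \<in> {K..N} \<Longrightarrow> 1 - \<delta> \<le> f s" "\<And>s. 0 \<le> f s" and "0 \<le> \<delta>"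
  shows "ln (real N + 1) - ln K - \<delta> * (1 + ln N) \<le> (\<Sum>s=1..N. f s / real s)"
proof -
  define H where "H = (\<Sum>s=K..N. 1 / real s)"
  have "H \<le> harm N"
    unfolding H_def harm_def inverse_eq_divide using K by (intro sum_mono2) auto
  then have "\<delta> * H \<le> \<delta> * (1 + ln N)"
    using harm_le_one_plus_ln[of N] \<open>0 \<le> \<delta>\<close> by (intro mult_left_mono) auto
  moreover have "ln (real N + 1) - ln K \<le> H" unfolding H_def by (rule ln_diff_le_sum_inverse[OF K])
  moreover have "H - \<delta> * H = (\<Sum>s=K..N. (1 - \<delta>) / real s)"
    unfolding H_def by (simp add: sum_subtractf sum_distrib_left diff_divide_distrib)
  moreover have "(\<Sum>s=K..N. (1 - \<delta>) / real s) \<le> (\<Sum>s=K..N. f s / real s)"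
    using f by (intro sum_mono divide_right_mono) auto
  moreover have "(\<Sum>s=K..N. f s / real s) \<le> (\<Sum>s=1..N. f s / real s)"
    using K f by (intro sum_mono2) auto
  ultimately show ?thesis by linarith
qed

lemma sum_truncated_inverse_square_le:
  assumes T: "1 \<le> T"
  shows "(\<Sum>t<N. if real t < T then 1 else (T / real t) ^ 2) \<le> 3 * T + 1"
proof -
  define K where "K = nat \<lceil>T\<rceil>"
  have K: "T \<le> real K" "real K < T + 1" "0 < K"
    using T ceiling_correct[of T] by (auto simp: K_def)
  have lt: "real t < T \<longleftrightarrow> t < K" for t
    unfolding K_def by linarith
  have "card ({..<N} \<inter> {t. t < K}) \<le> card {..<K}" by (intro card_mono) auto
  then have head: "(\<Sum>t\<in>{..<N} \<inter> {t. t < K}. 1) \<le> T + 1"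
    using K by simp
  have "(\<Sum>t\<in>{K..<N}. (T / real t) ^ 2) = T ^ 2 * (\<Sum>t\<in>{K..<N}. 1 / real t ^ 2)"
    by (simp add: sum_distrib_left power_divide)
  also have "\<dots> \<le> T ^ 2 * (2 / K)" by (intro mult_left_mono sum_inverse_square_le K(3)) simp
  also have "\<dots> \<le> T ^ 2 * (2 / T)" using K T by (intro mult_left_mono divide_left_mono) auto
  also have "\<dots> = 2 * T" using T by (simp add: power2_eq_square)
  finally have tail: "(\<Sum>t\<in>{K..<N}. (T / real t) ^ 2) \<le> 2 * T" .
  have "{..<N} \<inter> - {t. t < K} = {K..<N}" by auto
  then have "(\<Sum>t<N. if real t < T then 1 else (T / real t) ^ 2)
      = (\<Sum>t\<in>{..<N} \<inter> {t. t < K}. 1) + (\<Sum>t\<in>{K..<N}. (T / real t) ^ 2)"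
    unfolding lt by (simp add: sum.If_cases)
  then show ?thesis using head tail by linarith
qed

lemma real_eq_sum_of_bool_le: "x \<le> m \<Longrightarrow> real x = (\<Sum>j=1..m. of_bool (j \<le> x))"
proof -
  assume "x \<le> m"
  then have "{j \<in> {1..m}. j \<le> x} = {1..x}" by auto
  then show ?thesis by (simp add: of_bool_def sum.If_cases Int_def)
qed

section \<open>Decks and occurrence counts\<close>

definition occ :: "nat list \<Rightarrow> nat set \<Rightarrow> nat \<Rightarrow> nat" where
  "occ w S i = card {p \<in> S. w ! p = i}"

definition deck_mean :: "nat \<Rightarrow> nat \<Rightarrow> (nat list \<Rightarrow> real) \<Rightarrow> real" where
  "deck_mean m n f = (\<Sum>w\<in>decks m n. f w) / card (decks m n)"

definition deck_prob :: "nat \<Rightarrow> nat \<Rightarrow> (nat list \<Rightarrow> bool) \<Rightarrow> real" where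
  "deck_prob m n P = deck_mean m n (\<lambda>w. of_bool (P w))"

lemma finite_decks: "finite (decks m n)"
  by (rule finite_subset[OF _ finite_lists_length_eq[of "{1..n}" "m * n"]]) (auto simp: decks_def)

lemma mset_eq_in_decks:
  assumes "w \<in> decks m n" "mset v = mset w"
  shows "v \<in> decks m n"
proof -
  have "length v = length w" "set v = set w"
    using assms(2) mset_eq_length mset_eq_setD by blast+
  with assms show ?thesis by (simp add: decks_def)
qed

lemma length_deck: "w \<in> decks m n \<Longrightarrow> length w = m * n"
  by (simp add: decks_def)

fun sorted_deck :: "nat \<Rightarrow> nat \<Rightarrow> nat list" where
  "sorted_deck m 0 = []"
| "sorted_deck m (Suc n) = sorted_deck m n @ replicate m (Suc n)"

lemma sorted_deck_in_decks: "sorted_deck m n \<in> decks m n"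
proof (induction n)
  case 0
  then show ?case by (simp add: decks_def)
next
  case (Suc n)
  then have "count (mset (sorted_deck m n)) (Suc n) = 0"
    by (auto simp: decks_def count_eq_zero_iff)
  with Suc show ?case by (auto simp: decks_def)
qed

lemma card_decks_pos: "0 < card (decks m n)"
  using sorted_deck_in_decks finite_decks by (metis card_gt_0_iff empty_iff)

lemma deck_mean_mono:
  "(\<And>w. w \<in> decks m n \<Longrightarrow> f w \<le> g w) \<Longrightarrow> deck_mean m n f \<le> deck_mean m n g"
  unfolding deck_mean_def by (intro divide_right_mono sum_mono) auto

lemma deck_mean_cong:
  "(\<And>w. w \<in> decks m n \<Longrightarrow> f w = g w) \<Longrightarrow> deck_mean m n f = deck_mean m n g"
  unfolding deck_mean_def by (metis sum.cong)

lemma deck_mean_const [simp]: "deck_mean m n (\<lambda>w. c) = c"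
  using card_decks_pos[of m n] by (simp add: deck_mean_def)

lemma deck_mean_sum: "deck_mean m n (\<lambda>w. \<Sum>i\<in>I. f i w) = (\<Sum>i\<in>I. deck_mean m n (f i))"
  unfolding deck_mean_def by (simp add: sum.swap[of _ _ I] sum_divide_distrib)

lemma deck_mean_cmult: "deck_mean m n (\<lambda>w. c * f w) = c * deck_mean m n f"
  unfolding deck_mean_def by (simp add: sum_distrib_left)

lemma deck_mean_add: "deck_mean m n (\<lambda>w. f w + g w) = deck_mean m n f + deck_mean m n g"
  unfolding deck_mean_def by (simp add: sum.distrib add_divide_distrib)

lemma deck_mean_divide: "deck_mean m n (\<lambda>w. f w / c) = deck_mean m n f / c"
  unfolding deck_mean_def by (simp add: sum_divide_distrib mult.commute)

lemma deck_mean_diff: "deck_mean m n (\<lambda>w. f w - g w) = deck_mean m n f - deck_mean m n g"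
  unfolding deck_mean_def by (simp add: sum_subtractf diff_divide_distrib)

lemma deck_prob_nonneg: "0 \<le> deck_prob m n P"
  unfolding deck_prob_def deck_mean_def by (simp add: sum_nonneg)

lemma deck_prob_le_1: "deck_prob m n P \<le> 1"
  unfolding deck_prob_def using deck_mean_mono[of m n "\<lambda>w. of_bool (P w)" "\<lambda>w. 1"] by simp

lemma deck_prob_not: "deck_prob m n (\<lambda>w. \<not> P w) = 1 - deck_prob m n P"
proof -
  have "deck_prob m n (\<lambda>w. \<not> P w) = deck_mean m n (\<lambda>w. 1 - of_bool (P w))"
    unfolding deck_prob_def by (intro deck_mean_cong) simp
  then show ?thesis by (simp add: deck_mean_diff deck_prob_def)
qed

lemma occ_prefix: "t \<le> length w \<Longrightarrow> occ w {0..<t} i = count (mset (take t w)) i"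
proof -
  assume "t \<le> length w"
  then have "{p \<in> {0..<t}. w ! p = i} = {p. p < length (take t w) \<and> i = take t w ! p}"
    by auto
  then show ?thesis
    by (simp add: occ_def count_mset count_list_eq_length_filter length_filter_conv_card)
qed

lemma occ_all_positions:
  assumes "w \<in> decks m n" "i \<in> {1..n}"
  shows "occ w {0..<m * n} i = m"
  using occ_prefix[of "length w" w i] assms by (simp add: decks_def)

lemma occ_mono: "finite T \<Longrightarrow> S \<subseteq> T \<Longrightarrow> occ w S i \<le> occ w T i"
  unfolding occ_def by (rule card_mono) auto

lemma occ_le:
  assumes "w \<in> decks m n" "i \<in> {1..n}" "S \<subseteq> {0..<m * n}"
  shows "occ w S i \<le> m"
  using occ_mono[of "{0..<m * n}" S w i] occ_all_positions[OF assms(1,2)] assms(3) by simp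

lemma occ_suffix_prefix:
  assumes "w \<in> decks m n" "i \<in> {1..n}" "t \<le> m * n"
  shows "occ w {t..<m * n} i + occ w {0..<t} i = m"
proof -
  have "{p \<in> {0..<m * n}. w ! p = i} = {p \<in> {t..<m * n}. w ! p = i} \<union> {p \<in> {0..<t}. w ! p = i}"
    using assms(3) by auto
  moreover have "card ({p \<in> {t..<m * n}. w ! p = i} \<union> {p \<in> {0..<t}. w ! p = i}) =
      card {p \<in> {t..<m * n}. w ! p = i} + card {p \<in> {0..<t}. w ! p = i}"
    by (rule card_Un_disjoint) auto
  ultimately have "occ w {0..<m * n} i = occ w {t..<m * n} i + occ w {0..<t} i"
    unfolding occ_def by simp
  then show ?thesis using occ_all_positions[OF assms(1,2)] by simp
qed

lemma sum_occ:
  assumes "w \<in> decks m n" "S \<subseteq> {0..<m * n}"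
  shows "(\<Sum>i\<in>{1..n}. occ w S i) = card S"
proof -
  have "finite S" using assms(2) finite_subset by blast
  have "w ! p \<in> {1..n}" if "p \<in> S" for p
  proof -
    have "p < length w" using that assms by (auto simp: decks_def)
    then have "w ! p \<in> set w" by simp
    then show ?thesis using assms(1) unfolding decks_def by blast
  qed
  then have "card {i \<in> {1..n}. w ! p = i} = 1" if "p \<in> S" for p
    using that by (simp add: Collect_conj_eq Int_absorb1)
  then have "(\<Sum>i\<in>{1..n}. occ w S i) = (\<Sum>p\<in>S. 1)"
    unfolding occ_def using \<open>finite S\<close> by (intro sum_multicount_gen) auto
  then show ?thesis by simp
qed

section \<open>Exchangeability of positions\<close>

definition permute_positions :: "(nat \<Rightarrow> nat) \<Rightarrow> nat list \<Rightarrow> nat list" where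
  "permute_positions \<sigma> w = map (\<lambda>k. w ! \<sigma> k) [0..<length w]"

lemma length_permute_positions [simp]: "length (permute_positions \<sigma> w) = length w"
  by (simp add: permute_positions_def)

lemma nth_permute_positions [simp]: "k < length w \<Longrightarrow> permute_positions \<sigma> w ! k = w ! \<sigma> k"
  by (simp add: permute_positions_def)

lemma mset_permute_positions:
  assumes "bij_betw \<sigma> {0..<length w} {0..<length w}"
  shows "mset (permute_positions \<sigma> w) = mset w"
proof -
  have "mset (permute_positions \<sigma> w) = image_mset (nth w) (image_mset \<sigma> (mset_set {0..<length w}))"
    by (simp add: permute_positions_def multiset.map_comp o_def)
  also have "image_mset \<sigma> (mset_set {0..<length w}) = mset_set {0..<length w}"
    using assms by (simp add: image_mset_mset_set bij_betw_def)
  also have "image_mset (nth w) (mset_set {0..<length w}) = mset w"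
    by (metis map_nth mset_map mset_upt)
  finally show ?thesis .
qed

lemma permute_positions_in_decks:
  assumes "bij_betw \<sigma> {0..<m * n} {0..<m * n}" "w \<in> decks m n"
  shows "permute_positions \<sigma> w \<in> decks m n"
proof (rule mset_eq_in_decks[OF assms(2)])
  show "mset (permute_positions \<sigma> w) = mset w"
    using assms by (intro mset_permute_positions) (simp add: length_deck)
qed

lemma inj_on_permute_positions:
  assumes "bij_betw \<sigma> {0..<N} {0..<N}"
  shows "inj_on (permute_positions \<sigma>) {w. length w = N}"
proof (rule inj_onI)
  fix w v assume "w \<in> {w. length w = N}" "v \<in> {w. length w = N}"
    and eq: "permute_positions \<sigma> w = permute_positions \<sigma> v"
  then have len: "length w = N" "length v = N" by auto
  show "w = v"
  proof (rule nth_equalityI)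
    show "length w = length v" using len by simp
    fix q assume "q < length w"
    then have "q \<in> \<sigma> ` {0..<N}" using bij_betw_imp_surj_on[OF assms] len by simp
    then obtain k where "k < N" "q = \<sigma> k" by auto
    then show "w ! q = v ! q"
      using arg_cong[OF eq, of "\<lambda>u. u ! k"] len by simp
  qed
qed

lemma card_decks_le_by_permutation:
  assumes "bij_betw \<sigma> {0..<m * n} {0..<m * n}"
    and "\<And>w. w \<in> decks m n \<Longrightarrow> P w \<Longrightarrow> Q (permute_positions \<sigma> w)"
  shows "card {w \<in> decks m n. P w} \<le> card {w \<in> decks m n. Q w}"
proof (rule card_inj_on_le)
  show "inj_on (permute_positions \<sigma>) {w \<in> decks m n. P w}"
    by (rule inj_on_subset[OF inj_on_permute_positions[OF assms(1)]]) (auto simp: length_deck)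
  show "permute_positions \<sigma> ` {w \<in> decks m n. P w} \<subseteq> {w \<in> decks m n. Q w}"
    using assms permute_positions_in_decks by blast
qed (simp add: finite_decks)

text \<open>Swapping positions \<open>t\<close> and \<open>p\<close> keeps the first \<open>t\<close> cards, on which the guess depends.\<close>
lemma card_guess_matches_later:
  assumes "t \<le> p" "p < m * n"
  shows "card {w \<in> decks m n. g (take t w) = w ! p} = card {w \<in> decks m n. g (take t w) = w ! t}"
proof -
  let ?\<sigma> = "Transposition.transpose t p"
  have bij: "bij_betw ?\<sigma> {0..<m * n} {0..<m * n}" using assms by simp
  have take_eq: "take t (permute_positions ?\<sigma> w) = take t w" if "length w = m * n" for w
    by (rule nth_equalityI) (use that assms in \<open>auto simp: transpose_apply_other\<close>)
  have swap: "permute_positions ?\<sigma> w ! t = w ! p" "permute_positions ?\<sigma> w ! p = w ! t"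
    if "length w = m * n" for w
    using that assms by auto
  show ?thesis
    by (intro antisym card_decks_le_by_permutation[OF bij]) (simp_all add: length_deck take_eq swap)
qed

lemma card_guess_correct_at:
  assumes "t < m * n"
  shows "(m * n - t) * card {w \<in> decks m n. G (take t w) = w ! t}
       = (\<Sum>w\<in>decks m n. occ w {t..<m * n} (G (take t w)))"
proof -
  have "(\<Sum>w\<in>decks m n. occ w {t..<m * n} (G (take t w)))
      = (\<Sum>p\<in>{t..<m * n}. card {w \<in> decks m n. G (take t w) = w ! p})"
    unfolding occ_def by (intro sum_multicount_gen finite_decks) (auto simp: eq_commute)
  also have "\<dots> = (\<Sum>p\<in>{t..<m * n}. card {w \<in> decks m n. G (take t w) = w ! t})"
    by (intro sum.cong refl card_guess_matches_later) auto
  finally show ?thesis by simp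
qed

lemma expected_correct_eq_sum_copies_left:
  "expected_correct m n G =
     (\<Sum>t<m * n. deck_mean m n (\<lambda>w. occ w {t..<m * n} (G (take t w))) / real (m * n - t))"
proof -
  let ?D = "decks m n"
  have "(\<Sum>w\<in>?D. correct G w) = (\<Sum>w\<in>?D. card {t \<in> {..<m * n}. G (take t w) = w ! t})"
    unfolding correct_def by (intro sum.cong refl arg_cong[where f = card]) (auto simp: length_deck)
  also have "\<dots> = (\<Sum>t<m * n. card {w \<in> ?D. G (take t w) = w ! t})"
    by (intro sum_multicount_gen finite_decks) auto
  finally have "(\<Sum>w\<in>?D. real (correct G w)) = (\<Sum>t<m * n. real (card {w \<in> ?D. G (take t w) = w ! t}))"
    unfolding of_nat_sum[symmetric] by (rule arg_cong)
  also have "\<dots> = (\<Sum>t<m * n. (\<Sum>w\<in>?D. real (occ w {t..<m * n} (G (take t w)))) / real (m * n - t))"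
  proof (intro sum.cong refl)
    fix t assume t: "t \<in> {..<m * n}"
    define x where "x = real (m * n - t)"
    have "x * card {w \<in> ?D. G (take t w) = w ! t} = (\<Sum>w\<in>?D. real (occ w {t..<m * n} (G (take t w))))"
      unfolding x_def of_nat_mult[symmetric] of_nat_sum[symmetric]
      using card_guess_correct_at[of t m n G] t by simp
    moreover have "x > 0"
      using t unfolding x_def by (simp only: of_nat_0_less_iff zero_less_diff lessThan_iff)
    ultimately show "real (card {w \<in> ?D. G (take t w) = w ! t})
        = (\<Sum>w\<in>?D. real (occ w {t..<m * n} (G (take t w)))) / real (m * n - t)"
      unfolding x_def[symmetric] by (simp add: field_simps)
  qed
  finally show ?thesis
    by (simp add: expected_correct_def deck_mean_def sum_divide_distrib ac_simps)
qed

section \<open>Binomial moments of occurrence counts\<close>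

lemma ex_bij_betw_mapping_disjoint_pairs:
  assumes U: "finite U" and sub: "A \<subseteq> U" "B \<subseteq> U" "A' \<subseteq> U" "B' \<subseteq> U"
    and disj: "A \<inter> B = {}" "A' \<inter> B' = {}" and card: "card A' = card A" "card B' = card B"
  obtains \<sigma> where "bij_betw \<sigma> U U" "\<sigma> ` A' = A" "\<sigma> ` B' = B"
proof -
  have fin: "finite A" "finite B" "finite A'" "finite B'" using sub U finite_subset by metis+
  obtain f where f: "bij_betw f A' A" using finite_same_card_bij fin card by metis
  obtain g where g: "bij_betw g B' B" using finite_same_card_bij fin card by metis
  have "card (U - (A' \<union> B')) = card (U - (A \<union> B))"
    using sub disj fin U card by (simp add: card_Diff_subset card_Un_disjoint)
  then obtain h where h: "bij_betw h (U - (A' \<union> B')) (U - (A \<union> B))"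
    using finite_same_card_bij U by (metis finite_Diff)
  define \<sigma> where "\<sigma> x = (if x \<in> A' then f x else if x \<in> B' then g x else h x)" for x
  have 1: "bij_betw \<sigma> A' A" using f by (subst bij_betw_cong[of A' \<sigma> f]) (auto simp: \<sigma>_def)
  have 2: "bij_betw \<sigma> B' B" using g disj by (subst bij_betw_cong[of B' \<sigma> g]) (auto simp: \<sigma>_def)
  have 3: "bij_betw \<sigma> (U - (A' \<union> B')) (U - (A \<union> B))"
    using h by (subst bij_betw_cong[of _ \<sigma> h]) (auto simp: \<sigma>_def)
  have "bij_betw \<sigma> (A' \<union> B' \<union> (U - (A' \<union> B'))) (A \<union> B \<union> (U - (A \<union> B)))"
    by (intro bij_betw_combine 1 2 3) (use disj in auto)
  moreover have "A' \<union> B' \<union> (U - (A' \<union> B')) = U" "A \<union> B \<union> (U - (A \<union> B)) = U" using sub by auto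
  ultimately have "bij_betw \<sigma> U U" by simp
  with 1 2 show ?thesis using that by (simp add: bij_betw_def)
qed

definition disjoint_pairs :: "nat set \<Rightarrow> nat \<Rightarrow> nat \<Rightarrow> (nat set \<times> nat set) set" where
  "disjoint_pairs S a b = {(A, B). A \<subseteq> S \<and> B \<subseteq> S \<and> card A = a \<and> card B = b \<and> A \<inter> B = {}}"

definition shows_on :: "nat set \<Rightarrow> nat set \<Rightarrow> nat \<Rightarrow> nat \<Rightarrow> nat list \<Rightarrow> bool" where
  "shows_on A B i i' w \<longleftrightarrow> (\<forall>p\<in>A. w ! p = i) \<and> (\<forall>p\<in>B. w ! p = i')"

lemma finite_disjoint_pairs: "finite S \<Longrightarrow> finite (disjoint_pairs S a b)"
  unfolding disjoint_pairs_def by (rule finite_subset[of _ "Pow S \<times> Pow S"]) auto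

lemma card_disjoint_pairs:
  assumes "finite S"
  shows "card (disjoint_pairs S a b) = (card S choose a) * ((card S - a) choose b)"
proof -
  have "disjoint_pairs S a b = Sigma {A. A \<subseteq> S \<and> card A = a} (\<lambda>A. {B. B \<subseteq> S - A \<and> card B = b})"
    by (auto simp: disjoint_pairs_def)
  also have "card \<dots> = (\<Sum>A | A \<subseteq> S \<and> card A = a. card {B. B \<subseteq> S - A \<and> card B = b})"
    by (rule card_SigmaI) (use assms in auto)
  also have "\<dots> = (\<Sum>A | A \<subseteq> S \<and> card A = a. (card S - a) choose b)"
    using assms by (intro sum.cong refl)
      (auto simp: n_subsets card_Diff_subset finite_subset)
  finally show ?thesis using n_subsets[OF assms] by simp
qed

lemma card_disjoint_pairs_shows_on:
  assumes "finite S" "i \<noteq> i' \<or> b = 0"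
  shows "card {AB \<in> disjoint_pairs S a b. shows_on (fst AB) (snd AB) i i' w}
       = (occ w S i choose a) * (occ w S i' choose b)"
proof -
  have "{AB \<in> disjoint_pairs S a b. shows_on (fst AB) (snd AB) i i' w} =
      {A. A \<subseteq> {p \<in> S. w ! p = i} \<and> card A = a} \<times> {B. B \<subseteq> {p \<in> S. w ! p = i'} \<and> card B = b}"
  proof (intro equalityI subsetI)
    fix AB assume "AB \<in> {AB \<in> disjoint_pairs S a b. shows_on (fst AB) (snd AB) i i' w}"
    then show "AB \<in> {A. A \<subseteq> {p \<in> S. w ! p = i} \<and> card A = a} \<times> {B. B \<subseteq> {p \<in> S. w ! p = i'} \<and> card B = b}"
      by (auto simp: disjoint_pairs_def shows_on_def)
  next
    fix AB assume AB: "AB \<in> {A. A \<subseteq> {p \<in> S. w ! p = i} \<and> card A = a} \<times> {B. B \<subseteq> {p \<in> S. w ! p = i'} \<and> card B = b}"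
    then have "snd AB \<subseteq> S" by auto
    then have "finite (snd AB)" using assms(1) finite_subset by blast
    have "fst AB \<inter> snd AB = {}"
    proof (cases "i = i'")
      case True
      then have "snd AB = {}" using assms(2) AB \<open>finite (snd AB)\<close> by auto
      then show ?thesis by simp
    next
      case False
      then show ?thesis using AB by (auto simp: subset_iff)
    qed
    then show "AB \<in> {AB \<in> disjoint_pairs S a b. shows_on (fst AB) (snd AB) i i' w}"
      using AB by (auto simp: disjoint_pairs_def shows_on_def)
  qed
  then show ?thesis using assms(1)
    by (simp add: card_cartesian_product n_subsets occ_def)
qed

lemma card_decks_shows_on_invariant:
  assumes "(A, B) \<in> disjoint_pairs {0..<m * n} a b" "(A', B') \<in> disjoint_pairs {0..<m * n} a b"
  shows "card {w \<in> decks m n. shows_on A B i i' w} = card {w \<in> decks m n. shows_on A' B' i i' w}"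
proof -
  have le: "card {w \<in> decks m n. shows_on A B i i' w} \<le> card {w \<in> decks m n. shows_on A' B' i i' w}"
    if AB: "(A, B) \<in> disjoint_pairs {0..<m * n} a b" "(A', B') \<in> disjoint_pairs {0..<m * n} a b"
    for A B A' B'
  proof -
    obtain \<sigma> where \<sigma>: "bij_betw \<sigma> {0..<m * n} {0..<m * n}" "\<sigma> ` A' = A" "\<sigma> ` B' = B"
      by (rule ex_bij_betw_mapping_disjoint_pairs[of "{0..<m * n}" A B A' B'])
        (use AB in \<open>auto simp: disjoint_pairs_def\<close>)
    show ?thesis
    proof (rule card_decks_le_by_permutation[OF \<sigma>(1)])
      fix w assume "w \<in> decks m n" "shows_on A B i i' w"
      then show "shows_on A' B' i i' (permute_positions \<sigma> w)"
        using \<sigma> AB(2) by (auto simp: shows_on_def disjoint_pairs_def length_deck subset_iff)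
    qed
  qed
  show ?thesis using le[OF assms] le[OF assms(2,1)] by simp
qed

text \<open>Double counting pairs (deck, placement): each deck shows \<open>(m choose a) * (m choose b)\<close>
  placements, and each placement is shown by equally many decks.\<close>
lemma card_decks_shows_on:
  assumes AB: "(A, B) \<in> disjoint_pairs {0..<m * n} a b"
    and i: "i \<in> {1..n}" "i' \<in> {1..n}" "i \<noteq> i' \<or> b = 0"
  shows "card {w \<in> decks m n. shows_on A B i i' w} * card (disjoint_pairs {0..<m * n} a b)
       = card (decks m n) * (m choose a) * (m choose b)"
proof -
  let ?P = "disjoint_pairs {0..<m * n} a b"
  have "(\<Sum>w\<in>decks m n. card {AB \<in> ?P. shows_on (fst AB) (snd AB) i i' w})
      = card {w \<in> decks m n. shows_on A B i i' w} * card ?P"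
    using card_decks_shows_on_invariant[OF AB]
    by (intro sum_multicount finite_decks finite_disjoint_pairs) auto
  moreover have "(\<Sum>w\<in>decks m n. card {AB \<in> ?P. shows_on (fst AB) (snd AB) i i' w})
      = (\<Sum>w\<in>decks m n. (m choose a) * (m choose b))"
    using i by (intro sum.cong refl) (simp add: card_disjoint_pairs_shows_on occ_all_positions)
  ultimately show ?thesis by simp
qed

lemma sum_choose_occ_mult:
  assumes S: "S \<subseteq> {0..<m * n}" and i: "i \<in> {1..n}" "i' \<in> {1..n}" "i \<noteq> i' \<or> b = 0"
  shows "(\<Sum>w\<in>decks m n. (occ w S i choose a) * (occ w S i' choose b)) * card (disjoint_pairs {0..<m * n} a b)
       = card (disjoint_pairs S a b) * (card (decks m n) * (m choose a) * (m choose b))"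
proof -
  let ?P = "disjoint_pairs {0..<m * n} a b" and ?PS = "disjoint_pairs S a b"
  have fin: "finite S" using S finite_subset by blast
  have "(\<Sum>w\<in>decks m n. (occ w S i choose a) * (occ w S i' choose b))
      = (\<Sum>AB\<in>?PS. card {w \<in> decks m n. shows_on (fst AB) (snd AB) i i' w})"
    using fin i by (subst card_disjoint_pairs_shows_on[symmetric])
      (auto intro!: sum_multicount_gen finite_decks finite_disjoint_pairs)
  also have "\<dots> * card ?P = (\<Sum>AB\<in>?PS. card {w \<in> decks m n. shows_on (fst AB) (snd AB) i i' w} * card ?P)"
    by (simp add: sum_distrib_right)
  also have "\<dots> = (\<Sum>AB\<in>?PS. card (decks m n) * (m choose a) * (m choose b))"
  proof (intro sum.cong refl)
    fix AB assume "AB \<in> ?PS"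
    then have "(fst AB, snd AB) \<in> ?P" using S by (auto simp: disjoint_pairs_def)
    then show "card {w \<in> decks m n. shows_on (fst AB) (snd AB) i i' w} * card ?P
        = card (decks m n) * (m choose a) * (m choose b)"
      by (rule card_decks_shows_on[OF _ i])
  qed
  finally show ?thesis by simp
qed

text \<open>A fixed \<open>j\<close>-set of positions carries only copies of a given card type with probability
  \<open>(m choose j) / (mn choose j)\<close>.\<close>
definition mean_choose_occ :: "nat \<Rightarrow> nat \<Rightarrow> nat \<Rightarrow> nat \<Rightarrow> real" where
  "mean_choose_occ m n j s = real (m choose j) * real (s choose j) / real (m * n choose j)"

lemma deck_mean_choose_occ:
  assumes S: "S \<subseteq> {0..<m * n}" and i: "i \<in> {1..n}" and j: "j \<le> m * n"
  shows "deck_mean m n (\<lambda>w. real (occ w S i choose j)) = mean_choose_occ m n j (card S)"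
proof -
  have "(\<Sum>w\<in>decks m n. occ w S i choose j) * (m * n choose j)
      = (card S choose j) * (card (decks m n) * (m choose j))"
    using sum_choose_occ_mult[OF S i i, of 0 j] S
    by (simp add: card_disjoint_pairs finite_subset)
  then have "(\<Sum>w\<in>decks m n. real (occ w S i choose j)) * real (m * n choose j)
      = real (card S choose j) * (real (card (decks m n)) * real (m choose j))"
    unfolding of_nat_mult[symmetric] of_nat_sum[symmetric] by (rule arg_cong)
  moreover have "real (m * n choose j) > 0" using j by simp
  ultimately show ?thesis
    using card_decks_pos[of m n] unfolding deck_mean_def mean_choose_occ_def by (simp add: field_simps)
qed

lemma deck_mean_choose_occ_pair_le:
  assumes S: "S \<subseteq> {0..<m * n}" and i: "i \<in> {1..n}" "i' \<in> {1..n}" "i \<noteq> i'"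
    and j: "2 * j \<le> card S"
  shows "deck_mean m n (\<lambda>w. real (occ w S i choose j) * real (occ w S i' choose j))
       \<le> mean_choose_occ m n j (card S) ^ 2"
proof -
  have sN: "card S \<le> m * n" using card_mono[OF _ S] by simp
  define r where "r = real (card S choose j) / real (m * n choose j)"
  have "(\<Sum>w\<in>decks m n. (occ w S i choose j) * (occ w S i' choose j))
          * ((m * n choose j) * ((m * n - j) choose j))
      = (card S choose j) * ((card S - j) choose j) * (card (decks m n) * (m choose j) * (m choose j))"
    using sum_choose_occ_mult[OF S i(1,2) disjI1[OF i(3)], of j j] S by (simp add: card_disjoint_pairs finite_subset)
  then have "(\<Sum>w\<in>decks m n. real (occ w S i choose j) * real (occ w S i' choose j))
          * (real (m * n choose j) * real ((m * n - j) choose j))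
      = real (card S choose j) * real ((card S - j) choose j)
          * (real (card (decks m n)) * real (m choose j) * real (m choose j))"
    unfolding of_nat_mult[symmetric] of_nat_sum[symmetric] by (rule arg_cong)
  moreover have "real (m * n choose j) > 0" "real ((m * n - j) choose j) > 0" using j sN by simp_all
  ultimately have "deck_mean m n (\<lambda>w. real (occ w S i choose j) * real (occ w S i' choose j))
      = real (m choose j) ^ 2 * r * (real ((card S - j) choose j) / real ((m * n - j) choose j))"
    using card_decks_pos[of m n] unfolding deck_mean_def r_def by (simp add: field_simps power2_eq_square)
  also have "\<dots> \<le> real (m choose j) ^ 2 * r * r"
    using choose_ratio_diff_le[OF j sN] by (intro mult_left_mono) (auto simp: r_def)
  also have "\<dots> = mean_choose_occ m n j (card S) ^ 2"
    by (simp add: mean_choose_occ_def r_def power2_eq_square)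
  finally show ?thesis .
qed

lemma deck_prob_ex_occ_ge_le:
  assumes S: "S \<subseteq> {0..<m * n}" and j: "j \<le> m * n"
  shows "deck_prob m n (\<lambda>w. \<exists>i\<in>{1..n}. j \<le> occ w S i) \<le> n * mean_choose_occ m n j (card S)"
proof -
  have "of_bool (\<exists>i\<in>{1..n}. j \<le> occ w S i) \<le> (\<Sum>i\<in>{1..n}. real (occ w S i choose j))" for w
  proof (cases "\<exists>i\<in>{1..n}. j \<le> occ w S i")
    case True
    then obtain i where i: "i \<in> {1..n}" "j \<le> occ w S i" by blast
    then have "1 \<le> real (occ w S i choose j)" by (simp add: Suc_le_eq)
    also have "\<dots> \<le> (\<Sum>i\<in>{1..n}. real (occ w S i choose j))"
      using i by (intro member_le_sum) auto
    finally show ?thesis using True by simp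
  qed (simp add: sum_nonneg)
  then have "deck_prob m n (\<lambda>w. \<exists>i\<in>{1..n}. j \<le> occ w S i)
      \<le> (\<Sum>i\<in>{1..n}. deck_mean m n (\<lambda>w. real (occ w S i choose j)))"
    unfolding deck_prob_def deck_mean_sum[symmetric] by (rule deck_mean_mono)
  also have "\<dots> = n * mean_choose_occ m n j (card S)"
    using deck_mean_choose_occ[OF S _ j] by simp
  finally show ?thesis .
qed

lemma deck_prob_zero_le_second_moment:
  assumes mean: "deck_mean m n Z = \<mu>" and sq: "deck_mean m n (\<lambda>w. Z w ^ 2) \<le> \<mu> ^ 2 + c * \<mu>"
    and "0 < \<mu>"
  shows "deck_prob m n (\<lambda>w. Z w = 0) \<le> c / \<mu>"
proof -
  have "deck_prob m n (\<lambda>w. Z w = 0) \<le> deck_mean m n (\<lambda>w. (Z w - \<mu>) ^ 2 / \<mu> ^ 2)"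
    unfolding deck_prob_def using \<open>0 < \<mu>\<close> by (intro deck_mean_mono) auto
  also have "\<dots> = deck_mean m n (\<lambda>w. (Z w ^ 2 + \<mu> ^ 2) - 2 * \<mu> * Z w) / \<mu> ^ 2"
    unfolding deck_mean_def by (simp add: sum_divide_distrib power2_diff algebra_simps)
  also have "\<dots> = (deck_mean m n (\<lambda>w. Z w ^ 2) - 2 * \<mu> * deck_mean m n Z + \<mu> ^ 2) / \<mu> ^ 2"
    by (simp add: deck_mean_diff deck_mean_add deck_mean_cmult)
  also have "\<dots> \<le> (c * \<mu>) / \<mu> ^ 2"
    using mean sq by (intro divide_right_mono) (auto simp: power2_eq_square)
  also have "\<dots> = c / \<mu>" using \<open>0 < \<mu>\<close> by (simp add: power2_eq_square)
  finally show ?thesis .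
qed

lemma deck_mean_sum_choose_occ_sq_le:
  assumes S: "S \<subseteq> {0..<m * n}" and j: "2 * j \<le> card S"
  defines "\<mu> \<equiv> n * mean_choose_occ m n j (card S)"
  shows "deck_mean m n (\<lambda>w. (\<Sum>i\<in>{1..n}. real (occ w S i choose j)) ^ 2)
       \<le> \<mu> ^ 2 + real (m choose j) * \<mu>"
proof -
  let ?I = "{1..n}"
  define e where "e = mean_choose_occ m n j (card S)"
  define c where "c = real (m choose j)"
  define C where "C i w = real (occ w S i choose j)" for i w
  have "card S \<le> m * n" using card_mono[OF _ S] by simp
  then have mean_C: "deck_mean m n (C i) = e" if "i \<in> ?I" for i
    unfolding C_def e_def using deck_mean_choose_occ[OF S that] j by simp
  have C_le: "C i w \<le> c" if "w \<in> decks m n" "i \<in> ?I" for i w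
    unfolding C_def c_def using occ_le[OF that S] by (simp add: binomial_right_mono)
  have row: "(\<Sum>i'\<in>?I. deck_mean m n (\<lambda>w. C i w * C i' w)) \<le> c * e + n * e ^ 2" if i: "i \<in> ?I" for i
  proof -
    have "deck_mean m n (\<lambda>w. C i w * C i w) \<le> deck_mean m n (\<lambda>w. c * C i w)"
      using C_le i by (intro deck_mean_mono mult_right_mono) (auto simp: C_def)
    also have "\<dots> = c * e" by (simp add: deck_mean_cmult mean_C[OF i])
    finally have diag: "deck_mean m n (\<lambda>w. C i w * C i w) \<le> c * e" .
    have "(\<Sum>i'\<in>?I - {i}. deck_mean m n (\<lambda>w. C i w * C i' w)) \<le> card (?I - {i}) * e ^ 2"
      unfolding C_def e_def using S i j by (intro sum_bounded_above deck_mean_choose_occ_pair_le) auto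
    also have "\<dots> \<le> n * e ^ 2" using i by (intro mult_right_mono) auto
    finally show ?thesis using diag i by (simp add: sum.remove)
  qed
  have "deck_mean m n (\<lambda>w. (\<Sum>i\<in>?I. C i w) ^ 2) = (\<Sum>i\<in>?I. \<Sum>i'\<in>?I. deck_mean m n (\<lambda>w. C i w * C i' w))"
    by (simp add: power2_eq_square sum_product deck_mean_sum)
  also have "\<dots> \<le> (\<Sum>i\<in>?I. c * e + n * e ^ 2)" by (intro sum_mono row)
  also have "\<dots> = \<mu> ^ 2 + c * \<mu>" by (simp add: \<mu>_def e_def power2_eq_square algebra_simps)
  finally show ?thesis by (simp add: C_def c_def)
qed

lemma deck_prob_all_occ_less_le:
  assumes S: "S \<subseteq> {0..<m * n}" and j: "1 \<le> j" "j \<le> m" "2 * j \<le> card S" and n: "1 \<le> n"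
  shows "deck_prob m n (\<lambda>w. \<forall>i\<in>{1..n}. occ w S i < j)
       \<le> real (m * n choose j) / (n * real (card S choose j))"
proof -
  define \<mu> where "\<mu> = n * mean_choose_occ m n j (card S)"
  have sN: "card S \<le> m * n" using card_mono[OF _ S] by simp
  have "0 < \<mu>" using j n sN by (simp add: \<mu>_def mean_choose_occ_def)
  have "deck_mean m n (\<lambda>w. \<Sum>i\<in>{1..n}. real (occ w S i choose j)) = \<mu>"
    using deck_mean_choose_occ[OF S _, of _ j] j sN by (simp add: deck_mean_sum \<mu>_def)
  then have "deck_prob m n (\<lambda>w. (\<Sum>i\<in>{1..n}. real (occ w S i choose j)) = 0) \<le> real (m choose j) / \<mu>"
    using deck_mean_sum_choose_occ_sq_le[OF S j(3)] \<open>0 < \<mu>\<close> unfolding \<mu>_def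
    by (intro deck_prob_zero_le_second_moment) auto
  moreover have "(\<Sum>i\<in>{1..n}. real (occ w S i choose j)) = 0 \<longleftrightarrow> (\<forall>i\<in>{1..n}. occ w S i < j)" for w
    by (simp add: sum_nonneg_eq_0_iff binomial_eq_0_iff)
  moreover have "real (m choose j) / \<mu> = real (m * n choose j) / (n * real (card S choose j))"
    using j sN by (simp add: \<mu>_def mean_choose_occ_def)
  ultimately show ?thesis by simp
qed

section \<open>Extremal strategies\<close>

definition guess_least_seen :: "nat \<Rightarrow> nat list \<Rightarrow> nat" where
  "guess_least_seen n xs = arg_min_on (\<lambda>i. count (mset xs) i) {1..n}"

definition guess_most_seen :: "nat \<Rightarrow> nat list \<Rightarrow> nat" where
  "guess_most_seen n xs = arg_max_on (\<lambda>i. count (mset xs) i) {1..n}"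

lemma guess_least_seen_minimal:
  assumes "1 \<le> n"
  shows "guess_least_seen n xs \<in> {1..n}"
    and "k \<in> {1..n} \<Longrightarrow> count (mset xs) (guess_least_seen n xs) \<le> count (mset xs) k"
  using assms arg_min_if_finite(1)[of "{1..n}" "\<lambda>i. count (mset xs) i"]
    arg_min_least[of "{1..n}" k "\<lambda>i. count (mset xs) i"]
  unfolding guess_least_seen_def by auto

lemma guess_most_seen_maximal:
  assumes "1 \<le> n"
  shows "guess_most_seen n xs \<in> {1..n}"
    and "k \<in> {1..n} \<Longrightarrow> count (mset xs) k \<le> count (mset xs) (guess_most_seen n xs)"
proof -
  have "\<forall>y. y \<in> {1..n} \<longrightarrow> count (mset xs) y < Suc (length xs)"
    by (metis count_le_size le_imp_less_Suc size_mset)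
  then have "guess_most_seen n xs \<in> {1..n} \<and>
      (\<forall>k. k \<in> {1..n} \<longrightarrow> count (mset xs) k \<le> count (mset xs) (guess_most_seen n xs))"
    unfolding guess_most_seen_def arg_max_on_def
    using assms by (intro arg_max_nat_lemma[of _ 1]) auto
  then show "guess_most_seen n xs \<in> {1..n}"
    and "k \<in> {1..n} \<Longrightarrow> count (mset xs) k \<le> count (mset xs) (guess_most_seen n xs)"
    by auto
qed

lemma strategy_guess_least_seen: "1 \<le> n \<Longrightarrow> strategy n (guess_least_seen n)"
  using guess_least_seen_minimal(1) by (simp add: strategy_def)

lemma strategy_guess_most_seen: "1 \<le> n \<Longrightarrow> strategy n (guess_most_seen n)"
  using guess_most_seen_maximal(1) by (simp add: strategy_def)

lemma occ_suffix_le_of_count_prefix_le: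
  assumes "w \<in> decks m n" "t \<le> m * n" "i \<in> {1..n}" "k \<in> {1..n}"
    and "count (mset (take t w)) i \<le> count (mset (take t w)) k"
  shows "occ w {t..<m * n} k \<le> occ w {t..<m * n} i"
  using assms occ_suffix_prefix[OF assms(1,3,2)] occ_suffix_prefix[OF assms(1,4,2)]
    occ_prefix[of t w] by (simp add: length_deck)

definition prob_some_left_ge :: "nat \<Rightarrow> nat \<Rightarrow> nat \<Rightarrow> nat \<Rightarrow> real" where
  "prob_some_left_ge m n j t = deck_prob m n (\<lambda>w. \<exists>i\<in>{1..n}. j \<le> occ w {t..<m * n} i)"

definition optimal_score :: "nat \<Rightarrow> nat \<Rightarrow> real" where
  "optimal_score m n = (\<Sum>t<m * n. (\<Sum>j=1..m. prob_some_left_ge m n j t) / real (m * n - t))"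

lemma copies_left_le_levels:
  assumes G: "strategy n G" and w: "w \<in> decks m n" and t: "t \<le> m * n"
  shows "real (occ w {t..<m * n} (G (take t w)))
       \<le> (\<Sum>j=1..m. of_bool (\<exists>i\<in>{1..n}. j \<le> occ w {t..<m * n} i))"
    and "G = guess_least_seen n \<Longrightarrow> real (occ w {t..<m * n} (G (take t w)))
       = (\<Sum>j=1..m. of_bool (\<exists>i\<in>{1..n}. j \<le> occ w {t..<m * n} i))"
proof -
  have Gt: "G (take t w) \<in> {1..n}" using G by (simp add: strategy_def)
  have eq: "real (occ w {t..<m * n} (G (take t w))) = (\<Sum>j=1..m. of_bool (j \<le> occ w {t..<m * n} (G (take t w))))"
    using occ_le[OF w Gt] by (intro real_eq_sum_of_bool_le) auto
  then show "real (occ w {t..<m * n} (G (take t w)))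
       \<le> (\<Sum>j=1..m. of_bool (\<exists>i\<in>{1..n}. j \<le> occ w {t..<m * n} i))"
    unfolding eq using Gt by (intro sum_mono) auto
  assume "G = guess_least_seen n"
  then have "occ w {t..<m * n} i \<le> occ w {t..<m * n} (G (take t w))" if "i \<in> {1..n}" for i
    using Gt that w t guess_least_seen_minimal(2)[where xs = "take t w" and k = i]
    by (intro occ_suffix_le_of_count_prefix_le) auto
  then show "real (occ w {t..<m * n} (G (take t w)))
       = (\<Sum>j=1..m. of_bool (\<exists>i\<in>{1..n}. j \<le> occ w {t..<m * n} i))"
    unfolding eq using Gt by (intro sum.cong refl) (auto intro: order_trans)
qed

lemma expected_correct_le_optimal_score:
  assumes "strategy n G"
  shows "expected_correct m n G \<le> optimal_score m n"
  unfolding expected_correct_eq_sum_copies_left optimal_score_def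
proof (intro sum_mono divide_right_mono)
  fix t assume "t \<in> {..<m * n}"
  then have "deck_mean m n (\<lambda>w. occ w {t..<m * n} (G (take t w)))
      \<le> deck_mean m n (\<lambda>w. \<Sum>j=1..m. of_bool (\<exists>i\<in>{1..n}. j \<le> occ w {t..<m * n} i))"
    using copies_left_le_levels(1)[OF assms] by (intro deck_mean_mono) auto
  then show "deck_mean m n (\<lambda>w. occ w {t..<m * n} (G (take t w))) \<le> (\<Sum>j=1..m. prob_some_left_ge m n j t)"
    by (simp only: deck_mean_sum prob_some_left_ge_def deck_prob_def)
qed (simp only: of_nat_0_le_iff)

lemma expected_correct_guess_least_seen:
  assumes "1 \<le> n"
  shows "expected_correct m n (guess_least_seen n) = optimal_score m n"
  unfolding expected_correct_eq_sum_copies_left optimal_score_def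
proof (intro sum.cong refl arg_cong2[where f = divide])
  fix t assume "t \<in> {..<m * n}"
  then have "deck_mean m n (\<lambda>w. occ w {t..<m * n} (guess_least_seen n (take t w)))
      = deck_mean m n (\<lambda>w. \<Sum>j=1..m. of_bool (\<exists>i\<in>{1..n}. j \<le> occ w {t..<m * n} i))"
    using copies_left_le_levels(2)[OF strategy_guess_least_seen[OF assms]]
    by (intro deck_mean_cong) auto
  then show "deck_mean m n (\<lambda>w. occ w {t..<m * n} (guess_least_seen n (take t w)))
      = (\<Sum>j=1..m. prob_some_left_ge m n j t)"
    by (simp only: deck_mean_sum prob_some_left_ge_def deck_prob_def)
qed

lemma Cplus_eq_optimal_score:
  assumes "1 \<le> n"
  shows "Cplus m n = optimal_score m n"
  unfolding Cplus_def
proof (rule cSup_eq_maximum)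
  show "optimal_score m n \<in> expected_correct m n ` {G. strategy n G}"
    using expected_correct_guess_least_seen[OF assms] strategy_guess_least_seen[OF assms]
    by (metis image_eqI mem_Collect_eq)
qed (auto intro: expected_correct_le_optimal_score)

definition prob_none_exhausted :: "nat \<Rightarrow> nat \<Rightarrow> nat \<Rightarrow> real" where
  "prob_none_exhausted m n t = deck_prob m n (\<lambda>w. \<forall>i\<in>{1..n}. 1 \<le> occ w {t..<m * n} i)"

lemma expected_correct_ge_none_exhausted:
  assumes "strategy n G"
  shows "(\<Sum>t<m * n. prob_none_exhausted m n t) / real (m * n) \<le> expected_correct m n G"
  unfolding expected_correct_eq_sum_copies_left sum_divide_distrib
proof (rule sum_mono)
  fix t assume t: "t \<in> {..<m * n}"
  have mono: "prob_none_exhausted m n t \<le> deck_mean m n (\<lambda>w. occ w {t..<m * n} (G (take t w)))"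
    unfolding prob_none_exhausted_def deck_prob_def
    using assms by (intro deck_mean_mono) (auto simp: strategy_def)
  have pos: "0 < real (m * n - t)" and le: "real (m * n - t) \<le> real (m * n)"
    using t by (simp_all only: of_nat_0_less_iff zero_less_diff lessThan_iff of_nat_le_iff diff_le_self)
  have "prob_none_exhausted m n t / real (m * n) \<le> prob_none_exhausted m n t / real (m * n - t)"
    unfolding prob_none_exhausted_def
    by (rule divide_left_mono[OF le deck_prob_nonneg mult_pos_pos[OF order.strict_trans2[OF pos le] pos]])
  also have "\<dots> \<le> deck_mean m n (\<lambda>w. occ w {t..<m * n} (G (take t w))) / real (m * n - t)"
    by (rule divide_right_mono[OF mono]) (simp only: of_nat_0_le_iff)
  finally show "prob_none_exhausted m n t / real (m * n)
      \<le> deck_mean m n (\<lambda>w. occ w {t..<m * n} (G (take t w))) / real (m * n - t)" .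
qed

lemma copies_left_guess_most_seen_le:
  assumes n: "1 \<le> n" and w: "w \<in> decks m n" and t: "t < m * n"
  shows "real (occ w {t..<m * n} (guess_most_seen n (take t w))) / real (m * n - t)
       \<le> of_bool (\<forall>i\<in>{1..n}. 1 \<le> occ w {t..<m * n} i) / n"
proof -
  let ?g = "guess_most_seen n (take t w)"
  have le: "occ w {t..<m * n} ?g \<le> occ w {t..<m * n} k" if "k \<in> {1..n}" for k
    using that w t n guess_most_seen_maximal[where xs = "take t w"]
    by (intro occ_suffix_le_of_count_prefix_le) auto
  show ?thesis
  proof (cases "\<forall>i\<in>{1..n}. 1 \<le> occ w {t..<m * n} i")
    case True
    have "n * occ w {t..<m * n} ?g \<le> (\<Sum>k\<in>{1..n}. occ w {t..<m * n} k)"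
      using sum_mono[of "{1..n}" "\<lambda>_. occ w {t..<m * n} ?g", OF le] by simp
    also have "\<dots> = m * n - t" using sum_occ[OF w, of "{t..<m * n}"] by simp
    finally have "real n * occ w {t..<m * n} ?g \<le> real (m * n - t)"
      unfolding of_nat_mult[symmetric] of_nat_le_iff .
    moreover have "0 < real (m * n - t)" using t by (simp only: of_nat_0_less_iff zero_less_diff)
    moreover have "c / x \<le> 1 / n" if "real n * c \<le> x" "0 < x" for c x :: real
      using that n by (simp add: field_simps)
    ultimately have "real (occ w {t..<m * n} ?g) / real (m * n - t) \<le> 1 / n" by blast
    then show ?thesis using True by simp
  next
    case False
    then obtain k where "k \<in> {1..n}" "occ w {t..<m * n} k = 0" by auto
    with le[of k] False show ?thesis by simp
  qed
qed

lemma expected_correct_guess_most_seen_le: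
  assumes "1 \<le> n"
  shows "expected_correct m n (guess_most_seen n) \<le> (\<Sum>t<m * n. prob_none_exhausted m n t) / n"
  unfolding expected_correct_eq_sum_copies_left sum_divide_distrib
proof (rule sum_mono)
  fix t assume "t \<in> {..<m * n}"
  then have "deck_mean m n (\<lambda>w. occ w {t..<m * n} (guess_most_seen n (take t w)) / real (m * n - t))
      \<le> deck_mean m n (\<lambda>w. of_bool (\<forall>i\<in>{1..n}. 1 \<le> occ w {t..<m * n} i) / n)"
    using copies_left_guess_most_seen_le[OF assms] by (intro deck_mean_mono) auto
  then show "deck_mean m n (\<lambda>w. occ w {t..<m * n} (guess_most_seen n (take t w))) / real (m * n - t)
      \<le> prob_none_exhausted m n t / n"
    by (simp only: deck_mean_divide prob_none_exhausted_def deck_prob_def)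
qed

lemma expected_correct_nonneg: "0 \<le> expected_correct m n G"
  by (simp add: expected_correct_def sum_nonneg)

lemma Cminus_bounds:
  assumes "1 \<le> n"
  shows "(\<Sum>t<m * n. prob_none_exhausted m n t) / real (m * n) \<le> Cminus m n"
    and "Cminus m n \<le> (\<Sum>t<m * n. prob_none_exhausted m n t) / n"
proof -
  have ne: "expected_correct m n ` {G. strategy n G} \<noteq> {}"
    using strategy_guess_least_seen[OF assms] by auto
  show "(\<Sum>t<m * n. prob_none_exhausted m n t) / real (m * n) \<le> Cminus m n"
    unfolding Cminus_def using expected_correct_ge_none_exhausted by (intro cInf_greatest[OF ne]) auto
  have "Cminus m n \<le> expected_correct m n (guess_most_seen n)"
    unfolding Cminus_def using strategy_guess_most_seen[OF assms]
    by (intro cInf_lower) (auto intro: bdd_belowI expected_correct_nonneg)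
  also have "\<dots> \<le> (\<Sum>t<m * n. prob_none_exhausted m n t) / n"
    by (rule expected_correct_guess_most_seen_le[OF assms])
  finally show "Cminus m n \<le> (\<Sum>t<m * n. prob_none_exhausted m n t) / n" .
qed

text \<open>With \<open>s\<close> cards left, some card type has at least \<open>j\<close> copies left with probability
  about \<open>min 1 ((s / level_threshold n j) ^ j)\<close>.\<close>
definition level_threshold :: "nat \<Rightarrow> nat \<Rightarrow> real" where
  "level_threshold n j = real n powr (1 - 1 / real j)"

lemma level_threshold_power:
  assumes "1 \<le> n" "1 \<le> j"
  shows "level_threshold n j ^ j = real n ^ (j - 1)"
proof -
  have "level_threshold n j ^ j = level_threshold n j powr real j"
    using assms by (simp add: level_threshold_def powr_realpow)
  also have "\<dots> = real n powr ((1 - 1 / real j) * real j)"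
    unfolding level_threshold_def by (rule powr_powr)
  also have "(1 - 1 / real j) * real j = real (j - 1)" using assms by (simp add: field_simps of_nat_diff)
  also have "real n powr real (j - 1) = real n ^ (j - 1)" using assms by (intro powr_realpow) simp
  finally show ?thesis .
qed

lemma level_threshold_bounds:
  assumes "1 \<le> n" "1 \<le> j"
  shows "1 \<le> level_threshold n j" "level_threshold n j \<le> real n"
    and "ln (level_threshold n j) = ln n - ln n / j"
proof -
  show "1 \<le> level_threshold n j"
    unfolding level_threshold_def using assms by (intro ge_one_powr_ge_zero) auto
  have "real n powr (1 - 1 / real j) \<le> real n powr 1" using assms by (intro powr_mono) auto
  then show "level_threshold n j \<le> real n" using assms by (simp add: level_threshold_def)
  show "ln (level_threshold n j) = ln n - ln n / j"
    using assms by (simp add: level_threshold_def ln_powr algebra_simps diff_divide_distrib)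
qed

lemma choose_ratio_inverse_le:
  assumes n: "1 \<le> n" and j: "1 \<le> j" "2 * j \<le> s" "s \<le> m * n"
  shows "real (m * n choose j) / (n * real (s choose j)) \<le> (2 * real m * level_threshold n j / real s) ^ j"
proof -
  have "real n ^ j = real n * real n ^ (j - 1)" using j by (cases j) auto
  then have nj: "real n ^ j = real n * level_threshold n j ^ j" using level_threshold_power[OF n j(1)] by simp
  define q where "q = (real s / (2 * real (m * n))) ^ j"
  define \<rho> where "\<rho> = real (s choose j) / real (m * n choose j)"
  have "0 < m" using j by (cases m) auto
  then have pos: "0 < real (s choose j)" "0 < real (m * n choose j)" "0 < real s" "0 < q"
    using j n by (auto simp: q_def)
  have "q \<le> \<rho>" unfolding q_def \<rho>_def by (rule power_le_choose_ratio[OF j(2,3)])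
  have "real (m * n choose j) / (n * real (s choose j)) = 1 / (n * \<rho>)"
    using pos by (simp add: \<rho>_def)
  also have "\<dots> \<le> 1 / (n * q)"
    using \<open>q \<le> \<rho>\<close> pos n by (intro divide_left_mono mult_left_mono mult_pos_pos) auto
  also have "\<dots> = (2 * real m * level_threshold n j / real s) ^ j"
    using pos n nj by (simp add: q_def power_divide power_mult_distrib field_simps)
  finally show ?thesis .
qed

lemma prob_some_left_ge_upper:
  assumes n: "1 \<le> n" and j: "j \<in> {1..m}" and s: "s \<le> m * n"
  shows "prob_some_left_ge m n j (m * n - s) \<le> min 1 ((real s / level_threshold n j) ^ j)"
proof -
  define r where "r = level_threshold n j"
  have "real n ^ j = real n * real n ^ (j - 1)" using j by (cases j) auto
  then have nj: "real n ^ j = real n * r ^ j" using level_threshold_power[OF n, of j] j unfolding r_def by simp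
  have "0 < r" using level_threshold_bounds(1)[OF n, of j] j unfolding r_def by simp
  have jN: "j \<le> m * n" using j n by (simp add: le_trans[OF _ mult_le_mono2, of j m 1 n])
  have "prob_some_left_ge m n j (m * n - s) \<le> n * mean_choose_occ m n j s"
    unfolding prob_some_left_ge_def using deck_prob_ex_occ_ge_le[OF _ jN, of "{m * n - s..<m * n}"] s
    by simp
  also have "\<dots> \<le> n * (real m ^ j * (real s / real (m * n)) ^ j)"
  proof -
    have "m choose j \<le> m ^ j" using j by (intro binomial_le_pow) auto
    then have "real (m choose j) \<le> real m ^ j" by (metis of_nat_le_iff of_nat_power)
    then show ?thesis
      unfolding mean_choose_occ_def mult.assoc times_divide_eq_right[symmetric]
      using choose_ratio_le_power[OF s, of j]
      by (intro mult_left_mono mult_mono) auto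
  qed
  also have "\<dots> = (real s / r) ^ j"
    using n j \<open>0 < r\<close> nj by (simp add: power_divide power_mult_distrib field_simps)
  finally show ?thesis using deck_prob_le_1 by (simp add: prob_some_left_ge_def r_def)
qed

lemma prob_some_left_ge_lower:
  assumes n: "1 \<le> n" and j: "j \<in> {1..m}" "2 * j \<le> s" and s: "s \<le> m * n"
  shows "1 - (2 * real m * level_threshold n j / real s) ^ j \<le> prob_some_left_ge m n j (m * n - s)"
proof -
  have "prob_some_left_ge m n j (m * n - s) = 1 - deck_prob m n (\<lambda>w. \<forall>i\<in>{1..n}. occ w {m * n - s..<m * n} i < j)"
    unfolding prob_some_left_ge_def deck_prob_not[symmetric] by (simp add: not_less)
  moreover have "deck_prob m n (\<lambda>w. \<forall>i\<in>{1..n}. occ w {m * n - s..<m * n} i < j)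
      \<le> real (m * n choose j) / (n * real (s choose j))"
    using deck_prob_all_occ_less_le[of "{m * n - s..<m * n}" m n j] j s n by simp
  moreover have "\<dots> \<le> (2 * real m * level_threshold n j / real s) ^ j"
    using choose_ratio_inverse_le[OF n _ j(2) s] j by simp
  ultimately show ?thesis by linarith
qed

lemma prob_some_left_ge_near_one:
  assumes n: "1 \<le> n" and j: "j \<in> {1..m}" and L: "2 * real m \<le> L"
    and s: "level_threshold n j * L \<le> real s" "s \<le> m * n"
  shows "1 - 2 * real m / L \<le> prob_some_left_ge m n j (m * n - s)"
proof -
  define r where "r = level_threshold n j"
  have m: "1 \<le> j" "j \<le> m" using j by auto
  have r: "1 \<le> r" using level_threshold_bounds(1)[OF n m(1)] unfolding r_def .
  have "2 * real m * r \<le> r * L" using L r by (simp add: mult.commute mult_left_mono)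
  then have mrs: "2 * real m * r \<le> real s" using s(1) unfolding r_def[symmetric] by linarith
  have "real m \<le> real m * r" using m r by (simp add: mult_le_cancel_left1)
  then have "real (2 * j) \<le> 2 * real m * r" using m(2) by (simp add: order_trans)
  then have "2 * j \<le> s" using mrs by linarith
  then have low: "1 - (2 * real m * r / real s) ^ j \<le> prob_some_left_ge m n j (m * n - s)"
    using prob_some_left_ge_lower[OF n j _ s(2)] unfolding r_def by auto
  have "0 < real s" using \<open>2 * j \<le> s\<close> m by linarith
  then have "0 \<le> 2 * real m * r / real s" "2 * real m * r / real s \<le> 1" using mrs r by auto
  then have "(2 * real m * r / real s) ^ j \<le> 2 * real m * r / real s"
    using power_decreasing[of 1 j] m by fastforce
  also have "\<dots> \<le> 2 * real m * r / (r * L)"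
    using s(1) r L m \<open>0 < real s\<close> unfolding r_def[symmetric] by (intro divide_left_mono) auto
  also have "\<dots> = 2 * real m / L" using r by simp
  finally show ?thesis using low by linarith
qed

lemma prob_none_exhausted_eq_prefix:
  assumes "t \<le> m * n"
  shows "prob_none_exhausted m n t = deck_prob m n (\<lambda>w. \<forall>i\<in>{1..n}. occ w {0..<t} i < m)"
  unfolding prob_none_exhausted_def deck_prob_def
proof (intro deck_mean_cong arg_cong[where f = of_bool] ball_cong refl)
  fix w i assume "w \<in> decks m n" "i \<in> {1..n}"
  then show "1 \<le> occ w {t..<m * n} i \<longleftrightarrow> occ w {0..<t} i < m"
    using occ_suffix_prefix[OF _ _ assms, of w i] by linarith
qed

lemma prob_none_exhausted_lower:
  assumes "t \<le> m * n"
  shows "1 - n * (real t / real (m * n)) ^ m \<le> prob_none_exhausted m n t"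
proof -
  have "prob_none_exhausted m n t = 1 - deck_prob m n (\<lambda>w. \<exists>i\<in>{1..n}. m \<le> occ w {0..<t} i)"
    unfolding prob_none_exhausted_eq_prefix[OF assms] deck_prob_not[symmetric] by (simp add: not_le)
  moreover have "deck_prob m n (\<lambda>w. \<exists>i\<in>{1..n}. m \<le> occ w {0..<t} i) \<le> n * mean_choose_occ m n m t"
    using deck_prob_ex_occ_ge_le[of "{0..<t}" m n m] assms by (cases n) (auto simp: deck_prob_def)
  moreover have "mean_choose_occ m n m t \<le> (real t / real (m * n)) ^ m"
    using choose_ratio_le_power[OF assms, of m] by (simp add: mean_choose_occ_def)
  then have "n * mean_choose_occ m n m t \<le> n * (real t / real (m * n)) ^ m" by (rule mult_left_mono) simp
  ultimately show ?thesis by linarith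
qed

lemma prob_none_exhausted_upper:
  assumes n: "1 \<le> n" and m: "1 \<le> m" and t: "2 * m \<le> t" "t \<le> m * n"
  shows "prob_none_exhausted m n t \<le> (2 * real m * level_threshold n m / real t) ^ m"
proof -
  have "prob_none_exhausted m n t \<le> real (m * n choose m) / (n * real (t choose m))"
    unfolding prob_none_exhausted_eq_prefix[OF t(2)]
    using deck_prob_all_occ_less_le[of "{0..<t}" m n m] m t n by simp
  also have "\<dots> \<le> (2 * real m * level_threshold n m / real t) ^ m"
    by (rule choose_ratio_inverse_le[OF n m t])
  finally show ?thesis .
qed

lemma prob_none_exhausted_eq_0:
  assumes "1 \<le> n" "m * n < t + n"
  shows "prob_none_exhausted m n t = 0"
proof -
  have "\<not> (\<forall>i\<in>{1..n}. 1 \<le> occ w {t..<m * n} i)" if "w \<in> decks m n" for w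
  proof
    assume "\<forall>i\<in>{1..n}. 1 \<le> occ w {t..<m * n} i"
    then have "(\<Sum>i\<in>{1..n}. 1) \<le> (\<Sum>i\<in>{1..n}. occ w {t..<m * n} i)" by (intro sum_mono) auto
    also have "\<dots> = m * n - t" using sum_occ[OF that, of "{t..<m * n}"] by simp
    finally show False using assms by simp
  qed
  then show ?thesis
    unfolding prob_none_exhausted_def deck_prob_def by (simp add: deck_mean_cong[of m n _ "\<lambda>_. 0"])
qed

section \<open>Asymptotics\<close>

lemma optimal_score_eq_sum_levels:
  "optimal_score m n = (\<Sum>j=1..m. \<Sum>s=1..m * n. prob_some_left_ge m n j (m * n - s) / real s)"
proof -
  have "optimal_score m n = (\<Sum>t<m * n. \<Sum>j=1..m. prob_some_left_ge m n j t / real (m * n - t))"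
    by (simp only: optimal_score_def sum_divide_distrib)
  also have "\<dots> = (\<Sum>j=1..m. \<Sum>t<m * n. prob_some_left_ge m n j t / real (m * n - t))"
    by (rule sum.swap)
  also have "\<dots> = (\<Sum>j=1..m. \<Sum>s=1..m * n. prob_some_left_ge m n j (m * n - s) / real s)"
    by (intro sum.cong refl sum.reindex_bij_witness[of _ "\<lambda>s. m * n - s" "\<lambda>t. m * n - t"]) auto
  finally show ?thesis .
qed

lemma optimal_score_upper:
  assumes n: "1 \<le> n" and m: "1 \<le> m"
  shows "optimal_score m n \<le> harm m * ln n + m * (ln m + 2)"
proof -
  have "(\<Sum>s=1..m * n. prob_some_left_ge m n j (m * n - s) / real s) \<le> ln n / j + ln m + 2"
    if j: "j \<in> {1..m}" for j
  proof -
    define r where "r = level_threshold n j"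
    have r: "1 \<le> r" "r \<le> real n" "ln r = ln n - ln n / j"
      using level_threshold_bounds[OF n, of j] j unfolding r_def by auto
    have "n \<le> m * n" using m by simp
    then have "r \<le> real (m * n)" using r(2) of_nat_le_iff[of n "m * n"] by linarith
    have "(\<Sum>s=1..m * n. prob_some_left_ge m n j (m * n - s) / real s)
        \<le> (\<Sum>s=1..m * n. min 1 ((real s / r) ^ j) / real s)"
      using prob_some_left_ge_upper[OF n j] unfolding r_def[symmetric]
      by (intro sum_mono divide_right_mono) auto
    also have "\<dots> \<le> ln (real (m * n)) - ln r + 2"
      using j by (intro sum_min_one_power_div_le r(1) \<open>r \<le> real (m * n)\<close>) auto
    also have "\<dots> = ln n / j + ln m + 2" using r(3) m n by (simp add: ln_mult)
    finally show ?thesis .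
  qed
  then have "optimal_score m n \<le> (\<Sum>j=1..m. ln n / j + ln m + 2)"
    unfolding optimal_score_eq_sum_levels by (rule sum_mono)
  also have "\<dots> = harm m * ln n + m * (ln m + 2)"
    by (simp add: harm_mult_eq_sum sum.distrib distrib_left)
  finally show ?thesis .
qed

lemma level_sum_lower:
  assumes n: "1 \<le> n" and j: "j \<in> {1..m}" and L: "1 \<le> ln n" "2 * real m \<le> ln n"
  shows "ln n / j - ln (ln n) - (ln 2 + 2 * real m * (2 + ln m))
       \<le> (\<Sum>s=1..m * n. prob_some_left_ge m n j (m * n - s) / real s)"
proof -
  define L where "L = ln (real n)"
  define r where "r = level_threshold n j"
  define K where "K = nat \<lceil>r * L\<rceil>"
  define \<delta> where "\<delta> = 2 * real m / L"
  have m: "1 \<le> m" "1 \<le> j" "n \<le> m * n" using j by auto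
  have r: "1 \<le> r" "ln r = L - L / j"
    using level_threshold_bounds[OF n m(2)] unfolding r_def L_def by auto
  have L1: "1 \<le> L" "2 * real m \<le> L" using L by (auto simp: L_def)
  have "1 \<le> r * L" using r L1 by (metis mult_mono' mult_1 zero_le_one)
  then have K: "r * L \<le> real K" "real K \<le> 2 * (r * L)" "0 < K"
    unfolding K_def by linarith+
  have "1 - \<delta> \<le> prob_some_left_ge m n j (m * n - s)" if "s \<in> {K..m * n}" for s
    using prob_some_left_ge_near_one[OF n j L1(2), of s] that K(1) unfolding \<delta>_def r_def by auto
  then have "ln (real (m * n) + 1) - ln K - \<delta> * (1 + ln (real (m * n)))
      \<le> (\<Sum>s=1..m * n. prob_some_left_ge m n j (m * n - s) / real s)"
    using L1 by (intro sum_div_ge_of_ge_one_minus K(3))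
      (auto simp: \<delta>_def prob_some_left_ge_def deck_prob_nonneg)
  moreover have "real n \<le> real (m * n) + 1" using m(3) of_nat_le_iff[of n "m * n"] by linarith
  then have "L \<le> ln (real (m * n) + 1)" unfolding L_def using n by (intro ln_mono) auto
  moreover have "ln K \<le> ln (2 * (r * L))" using K by (subst ln_le_cancel_iff) auto
  moreover have "ln (2 * (r * L)) = ln 2 + (L - L / j) + ln L" using r L1 by (simp add: ln_mult)
  moreover have "ln (real (m * n)) = ln m + L" using n m by (simp add: L_def ln_mult)
  then have "\<delta> * (1 + ln (real (m * n))) = 2 * real m * (1 + ln m) / L + 2 * real m"
    using L1 by (simp add: \<delta>_def field_simps)
  moreover have "2 * real m * (1 + ln m) / L \<le> 2 * real m * (1 + ln m)"
    using divide_left_mono[of 1 L "2 * real m * (1 + ln m)"] L1 m by simp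
  ultimately show ?thesis unfolding L_def by (simp add: algebra_simps)
qed

lemma optimal_score_lower:
  assumes n: "1 \<le> n" and L: "1 \<le> ln n" "2 * real m \<le> ln n"
  shows "harm m * ln n - m * ln (ln n) - m * (ln 2 + 2 * real m * (2 + ln m)) \<le> optimal_score m n"
proof -
  have "harm m * ln n - m * ln (ln n) - m * (ln 2 + 2 * real m * (2 + ln m))
      = (\<Sum>j=1..m. ln n / j - ln (ln n) - (ln 2 + 2 * real m * (2 + ln m)))"
    by (simp add: harm_mult_eq_sum sum_subtractf)
  also have "\<dots> \<le> optimal_score m n"
    unfolding optimal_score_eq_sum_levels using level_sum_lower[OF n _ L] by (rule sum_mono)
  finally show ?thesis .
qed

lemma Cminus_lower:
  assumes n: "1 \<le> n" and m: "1 \<le> m"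
  shows "real n powr (- 1 / real m) / 4 \<le> Cminus m n"
proof -
  define a where "a = (2 * real n) powr (- 1 / real m)"
  define x where "x = real (m * n) * a"
  define K where "K = nat \<lceil>x\<rceil>"
  have "(2 * real n) powr (- 1 / real m) \<le> (2 * real n) powr 0" using n by (intro powr_mono) auto
  then have a: "0 < a" "a \<le> 1" unfolding a_def using n by auto
  have "a ^ m = a powr real m" using a(1) by (rule powr_realpow[symmetric])
  also have "\<dots> = (2 * real n) powr (- 1 / real m * real m)" unfolding a_def by (rule powr_powr)
  also have "- 1 / real m * real m = - 1" using m by simp
  finally have am: "a ^ m = 1 / (2 * real n)" using n by (simp add: powr_minus_divide)
  have x: "0 \<le> x" "x \<le> real (m * n)" unfolding x_def using a by (auto intro: mult_left_le)
  then have K: "x \<le> real K" "K \<le> m * n" unfolding K_def by linarith+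
  have half: "1 / 2 \<le> prob_none_exhausted m n t" if "t < K" for t
  proof -
    have "real t < x" using that unfolding K_def by linarith
    then have "(real t / real (m * n)) ^ m \<le> a ^ m"
      using x n m by (intro power_mono) (auto simp: x_def field_simps)
    then have "n * (real t / real (m * n)) ^ m \<le> 1 / 2" using n am by (simp add: field_simps)
    moreover have "t \<le> m * n" using that K by simp
    ultimately show ?thesis using prob_none_exhausted_lower[of t m n] by linarith
  qed
  have "(\<Sum>t<K. 1 / 2) \<le> (\<Sum>t<K. prob_none_exhausted m n t)" using half by (intro sum_mono) auto
  then have "x / 2 \<le> (\<Sum>t<K. prob_none_exhausted m n t)" using K(1) by simp
  also have "\<dots> \<le> (\<Sum>t<m * n. prob_none_exhausted m n t)"
    using K(2) by (intro sum_mono2) (auto simp: prob_none_exhausted_def deck_prob_nonneg)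
  finally have "a / 2 \<le> (\<Sum>t<m * n. prob_none_exhausted m n t) / real (m * n)"
    using n m by (simp add: x_def field_simps)
  also have "\<dots> \<le> Cminus m n" using Cminus_bounds(1)[OF n] by simp
  finally have "a / 2 \<le> Cminus m n" .
  moreover have "1 / 2 \<le> 2 powr (- 1 / real m)"
    using powr_mono[of "- 1" "- 1 / real m" 2] m by (simp add: powr_minus_divide field_simps)
  then have "real n powr (- 1 / real m) / 4 \<le> a / 2"
    unfolding a_def using n by (simp add: powr_mult mult_right_mono)
  ultimately show ?thesis by linarith
qed

lemma sum_prob_none_exhausted_le:
  assumes n: "1 \<le> n" and m: "1 \<le> m"
  shows "(\<Sum>t<m * n. prob_none_exhausted m n t) \<le> 6 * real m * level_threshold n m + 1"
proof (cases "m = 1")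
  case True
  have "(\<Sum>t<m * n. prob_none_exhausted m n t) = (\<Sum>t<m * n. if t = 0 then prob_none_exhausted m n t else 0)"
    using True n by (intro sum.cong refl) (auto intro: prob_none_exhausted_eq_0)
  also have "\<dots> \<le> 1"
    using n True deck_prob_le_1 by (simp add: prob_none_exhausted_def)
  finally show ?thesis using True n by (simp add: level_threshold_def)
next
  case False
  define T where "T = 2 * real m * level_threshold n m"
  have "1 \<le> level_threshold n m" using level_threshold_bounds(1)[OF n m] .
  then have "2 * real m \<le> T" unfolding T_def using mult_left_mono[of 1 _ "2 * real m"] by simp
  then have T: "2 * real m \<le> T" "1 \<le> T" using m by auto
  have "prob_none_exhausted m n t \<le> (if real t < T then 1 else (T / real t) ^ 2)" if "t < m * n" for t
  proof (cases "real t < T")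
    case False
    then have "2 * m \<le> t" "0 < real t" using T by linarith+
    then have "prob_none_exhausted m n t \<le> (T / real t) ^ m"
      using prob_none_exhausted_upper[OF n m _] that unfolding T_def by auto
    also have "\<dots> \<le> (T / real t) ^ 2"
      using False T \<open>0 < real t\<close> \<open>m \<noteq> 1\<close> m by (intro power_decreasing) auto
    finally show ?thesis using False by simp
  qed (simp add: prob_none_exhausted_def deck_prob_le_1)
  then have "(\<Sum>t<m * n. prob_none_exhausted m n t) \<le> (\<Sum>t<m * n. if real t < T then 1 else (T / real t) ^ 2)"
    by (intro sum_mono) auto
  also have "\<dots> \<le> 3 * T + 1" by (rule sum_truncated_inverse_square_le[OF T(2)])
  finally show ?thesis by (simp add: T_def)
qed

lemma Cminus_upper:
  assumes n: "1 \<le> n" and m: "1 \<le> m"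
  shows "Cminus m n \<le> (6 * real m + 1) * real n powr (- 1 / real m)"
proof -
  have "level_threshold n m / real n = real n powr (1 - 1 / real m) / real n powr 1"
    using n by (simp add: level_threshold_def)
  also have "\<dots> = real n powr (1 - 1 / real m - 1)" by (rule powr_diff[symmetric])
  finally have split: "level_threshold n m / real n = real n powr (- 1 / real m)" by simp
  have inv: "1 / real n \<le> real n powr (- 1 / real m)"
    using powr_mono[of "- 1" "- 1 / real m" "real n"] n m by (simp add: powr_minus_divide field_simps)
  have "Cminus m n \<le> (6 * real m * level_threshold n m + 1) / real n"
    using Cminus_bounds(2)[OF n] sum_prob_none_exhausted_le[OF n m] n
    by (meson divide_right_mono of_nat_0_le_iff order_trans)
  also have "\<dots> = 6 * real m * real n powr (- 1 / real m) + 1 / real n"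
    unfolding add_divide_distrib split[symmetric] by simp
  also have "\<dots> \<le> (6 * real m + 1) * real n powr (- 1 / real m)"
    using inv by (simp add: distrib_right)
  finally show ?thesis .
qed

lemma Cplus_asymp_equiv:
  assumes m: "1 \<le> m"
  shows "(\<lambda>n. Cplus m n) \<sim>[at_top] (\<lambda>n. harm m * ln (real n))"
proof (rule smallo_imp_asymp_equiv)
  have "(0 :: real) < harm m" using m by (intro harm_pos) simp
  then have H: "harm m \<noteq> (0 :: real)" by linarith
  define C where "C = real m * (ln 2 + 2 * real m * (2 + ln m)) + real m * (ln m + 2)"
  have "eventually (\<lambda>n::nat. max 1 (2 * real m) \<le> ln (real n)) at_top" by real_asymp
  then have "eventually (\<lambda>n. \<bar>Cplus m n - harm m * ln (real n)\<bar> \<le> real m * ln (ln (real n)) + C) at_top"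
    using eventually_ge_at_top[of 1]
  proof eventually_elim
    case (elim n)
    then have n: "1 \<le> n" and L: "1 \<le> ln (real n)" "2 * real m \<le> ln (real n)" by auto
    have "0 \<le> ln (ln (real n))" "0 \<le> ln (real m)" using L m by auto
    then have "0 \<le> real m * ln (ln (real n))" "0 \<le> real m * (ln 2 + 2 * real m * (2 + ln m))"
      "0 \<le> real m * (ln m + 2)"
      by simp_all
    then show ?case
      using optimal_score_upper[OF n m] optimal_score_lower[OF n L] Cplus_eq_optimal_score[OF n, of m]
      unfolding C_def abs_le_iff by linarith
  qed
  then have "(\<lambda>n. Cplus m n - harm m * ln (real n)) \<in> O(\<lambda>n. real m * ln (ln (real n)) + C)"
    by (intro bigoI[of _ 1]) (auto elim!: eventually_mono)
  also have "(\<lambda>n. real m * ln (ln (real n)) + C) \<in> o(\<lambda>n. ln (real n))" by real_asymp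
  also have "(\<lambda>n. ln (real n)) \<in> \<Theta>(\<lambda>n. harm m * ln (real n))"
    using H by simp
  finally show "(\<lambda>n. Cplus m n - harm m * ln (real n)) \<in> o(\<lambda>n. harm m * ln (real n))" .
qed

lemma Cminus_bigtheta:
  assumes m: "1 \<le> m"
  shows "(\<lambda>n. Cminus m n) \<in> \<Theta>(\<lambda>n. real n powr (- 1 / real m))"
proof (rule bigthetaI'[of "1 / 4" "6 * real m + 1"])
  show "eventually (\<lambda>n. 1 / 4 * norm (real n powr (- 1 / real m)) \<le> norm (Cminus m n) \<and>
      norm (Cminus m n) \<le> (6 * real m + 1) * norm (real n powr (- 1 / real m))) at_top"
    using eventually_ge_at_top[of 1]
  proof eventually_elim
    case (elim n)
    then have "real n powr (- 1 / real m) / 4 \<le> Cminus m n" "Cminus m n \<le> (6 * real m + 1) * real n powr (- 1 / real m)"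
      using Cminus_lower Cminus_upper m by auto
    moreover have "0 \<le> real n powr (- 1 / real m)" by simp
    ultimately have "0 \<le> Cminus m n" by linarith
    with \<open>real n powr (- 1 / real m) / 4 \<le> Cminus m n\<close>
      \<open>Cminus m n \<le> (6 * real m + 1) * real n powr (- 1 / real m)\<close>
    show ?case by simp
  qed
qed simp_all

theorem theorem1p2:
  fixes m :: nat
  assumes "m \<ge> 1"
  shows "(\<lambda>n. Cplus m n) \<sim>[at_top] (\<lambda>n. harm m * ln (real n)) \<and>
         (\<lambda>n. Cminus m n) \<in> \<Theta>(\<lambda>n. real n powr (- 1 / real m))"
  using Cplus_asymp_equiv[OF assms] Cminus_bigtheta[OF assms] by simp

end
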